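(* Let $T\in K\{X\}_\infty$ be a monomial. Then $$\Delta_a(T)=\sum_{I\subseteq\mathrm{Le}(T)}\mathrm{red}(T|I)\otimes\mathrm{red}(T|I^c),$$ where $I^c=\mathrm{Le}(T)\setminus I$. The same formula holds for the restriction of $\Delta_a$ to $K\{X\}$ and $T\in K\{X\}$ a monomial.
   Context: $K$ is a field of characteristic $0$ and $X=\{x_1,x_2,\dots\}$ a finite or countable set of variables. A planar rooted tree is reduced if no vertex has exactly one incoming edge. $K\{X\}_\infty$ has basis the monomials: the empty tree $1$ and all planar reduced rooted trees with leaves labelled by elements of $X$; for $k\ge2$, $\vee^k$ grafts $k$ nonempty trees (in order) onto a new root, extended multilinearly, with unit conventions (arguments $1$ omitted, $\vee^1=\mathrm{id}$, $\vee^k(1,\dots,1)=1$). $K\{X\}$ is the span of $1$ and the binary trees. $K\{X\}_\infty\otimes K\{X\}_\infty$ carries the operations componentwise ($\vee^k(a_1\otimes b_1,\dots,a_k\otimes b_k)=\vee^k(a_1,\dots,a_k)\otimes\vee^k(b_1,\dots,b_k)$), and $\Delta_a$ is the unique unital homomorphism for the $\vee^k$ with $\Delta_a(x_i)=x_i\otimes1+1\otimes x_i$. $\mathrm{Le}(T)$ is the set of leaves of $T$. For $I\subseteq\mathrm{Le}(T)$, the leaf-restriction $T|I$ is obtained from $T$ by deleting every vertex whose full subtree (the vertex and all its descendants) contains no leaf of $I$ (it is the empty tree $1$ if $I=\emptyset$); the reduction $\mathrm{red}(S)$ of a labelled tree $S$ is obtained by deleting all vertices with exactly one child, the remaining vertices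 keeping their labels and the descendant relation (so $v'$ is a descendant of $v$ in $\mathrm{red}(S)$ iff it is in $S$), and keeping the planar order. *)

theory Defs
  imports "HOL-Library.Poly_Mapping" "HOL-Library.Countable"
begin

datatype 'x tree = Leaf 'x | Node "'x tree list"

text \<open>Monomials: None is the empty tree 1, Some t a nonempty tree.\<close>
type_synonym 'x mon = "'x tree option"

fun reduced :: "'x tree \<Rightarrow> bool" where
  "reduced (Leaf x) = True"
| "reduced (Node ts) = (2 \<le> length ts \<and> (\<forall>t\<in>set ts. reduced t))"

fun binary :: "'x tree \<Rightarrow> bool" where
  "binary (Leaf x) = True"
| "binary (Node ts) = (length ts = 2 \<and> (\<forall>t\<in>set ts. binary t))"

definition is_mon_inf :: "'x mon \<Rightarrow> bool" where
  "is_mon_inf m = (case m of None \<Rightarrow> True | Some t \<Rightarrow> reduced t)"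

definition is_mon_bin :: "'x mon \<Rightarrow> bool" where
  "is_mon_bin m = (case m of None \<Rightarrow> True | Some t \<Rightarrow> binary t)"

text \<open>Vectors are finitely supported coefficient functions on monomials;
 the tensor square has basis the pairs of monomials.\<close>

definition Kinf :: "('x mon \<Rightarrow>\<^sub>0 'k::field) set" where
  "Kinf = {v. \<forall>m\<in>Poly_Mapping.keys v. is_mon_inf m}"

definition Kbin :: "('x mon \<Rightarrow>\<^sub>0 'k::field) set" where
  "Kbin = {v. \<forall>m\<in>Poly_Mapping.keys v. is_mon_bin m}"

definition smul :: "'k::field \<Rightarrow> ('a \<Rightarrow>\<^sub>0 'k) \<Rightarrow> ('a \<Rightarrow>\<^sub>0 'k)" where
  "smul c v = Poly_Mapping.map (\<lambda>y. c * y) v"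

definition one_v :: "'x mon \<Rightarrow>\<^sub>0 'k::field" where
  "one_v = Poly_Mapping.single None 1"

definition one_t :: "('x mon \<times> 'x mon) \<Rightarrow>\<^sub>0 'k::field" where
  "one_t = Poly_Mapping.single (None, None) 1"

definition var_v :: "'x \<Rightarrow> 'x mon \<Rightarrow>\<^sub>0 'k::field" where
  "var_v x = Poly_Mapping.single (Some (Leaf x)) 1"

definition prim_t :: "'x \<Rightarrow> ('x mon \<times> 'x mon) \<Rightarrow>\<^sub>0 'k::field" where
  "prim_t x = Poly_Mapping.single (Some (Leaf x), None) 1
            + Poly_Mapping.single (None, Some (Leaf x)) 1"

text \<open>Grafting of monomials with the unit conventions: arguments 1 are omitted,
 grafting a single tree is the identity, grafting only 1's gives 1.\<close>
definition graft :: "'x mon list \<Rightarrow> 'x mon" where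
  "graft ms = (let ts = [t. Some t \<leftarrow> ms] in
     (case ts of [] \<Rightarrow> None | [t] \<Rightarrow> Some t | _ \<Rightarrow> Some (Node ts)))"

definition multilin :: "('a list \<Rightarrow> 'b) \<Rightarrow> ('a \<Rightarrow>\<^sub>0 'k::field) list \<Rightarrow> ('b \<Rightarrow>\<^sub>0 'k)" where
  "multilin f vs = (\<Sum>ms\<in>listset (map Poly_Mapping.keys vs).
      Poly_Mapping.single (f ms) (prod_list (map2 Poly_Mapping.lookup vs ms)))"

definition vee :: "('x mon \<Rightarrow>\<^sub>0 'k::field) list \<Rightarrow> ('x mon \<Rightarrow>\<^sub>0 'k)" where
  "vee vs = multilin graft vs"

definition vee_t :: "(('x mon \<times> 'x mon) \<Rightarrow>\<^sub>0 'k::field) list \<Rightarrow> (('x mon \<times> 'x mon) \<Rightarrow>\<^sub>0 'k)" where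
  "vee_t vs = multilin (\<lambda>ps. (graft (map fst ps), graft (map snd ps))) vs"

definition is_Delta_inf :: "(('x mon \<Rightarrow>\<^sub>0 'k::field) \<Rightarrow> (('x mon \<times> 'x mon) \<Rightarrow>\<^sub>0 'k)) \<Rightarrow> bool" where
  "is_Delta_inf D \<longleftrightarrow>
     (\<forall>a\<in>Kinf. \<forall>b\<in>Kinf. D (a + b) = D a + D b) \<and>
     (\<forall>c. \<forall>a\<in>Kinf. D (smul c a) = smul c (D a)) \<and>
     D one_v = one_t \<and>
     (\<forall>x. D (var_v x) = prim_t x) \<and>
     (\<forall>vs. 2 \<le> length vs \<longrightarrow> set vs \<subseteq> Kinf \<longrightarrow> D (vee vs) = vee_t (map D vs))"

definition is_Delta_bin :: "(('x mon \<Rightarrow>\<^sub>0 'k::field) \<Rightarrow> (('x mon \<times> 'x mon) \<Rightarrow>\<^sub>0 'k)) \<Rightarrow> bool" where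
  "is_Delta_bin D \<longleftrightarrow>
     (\<forall>a\<in>Kbin. \<forall>b\<in>Kbin. D (a + b) = D a + D b) \<and>
     (\<forall>c. \<forall>a\<in>Kbin. D (smul c a) = smul c (D a)) \<and>
     D one_v = one_t \<and>
     (\<forall>x. D (var_v x) = prim_t x) \<and>
     (\<forall>a\<in>Kbin. \<forall>b\<in>Kbin. D (vee [a, b]) = vee_t [D a, D b])"

text \<open>Leaves are identified by their paths (lists of child indices) from the root.\<close>
fun leaves :: "'x tree \<Rightarrow> nat list set"
and leavess :: "nat \<Rightarrow> 'x tree list \<Rightarrow> nat list set" where
  "leaves (Leaf x) = {[]}"
| "leaves (Node ts) = leavess 0 ts"
| "leavess i [] = {}"
| "leavess i (t # ts) = (Cons i) ` leaves t \<union> leavess (Suc i) ts"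

definition leaves_m :: "'x mon \<Rightarrow> nat list set" where
  "leaves_m m = (case m of None \<Rightarrow> {} | Some t \<Rightarrow> leaves t)"

text \<open>T|I: delete all vertices whose subtree contains no leaf of I (result None = empty tree).\<close>
fun restr :: "nat list set \<Rightarrow> 'x tree \<Rightarrow> 'x tree option"
and restrs :: "nat list set \<Rightarrow> nat \<Rightarrow> 'x tree list \<Rightarrow> 'x tree list" where
  "restr I (Leaf x) = (if [] \<in> I then Some (Leaf x) else None)"
| "restr I (Node ts) = (case restrs I 0 ts of [] \<Rightarrow> None | ts' \<Rightarrow> Some (Node ts'))"
| "restrs I i [] = []"
| "restrs I i (t # ts) =
     (case restr {p. i # p \<in> I} t of
        None \<Rightarrow> restrs I (Suc i) ts
      | Some t' \<Rightarrow> t' # restrs I (Suc i) ts)"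

definition restr_m :: "nat list set \<Rightarrow> 'x mon \<Rightarrow> 'x mon" where
  "restr_m I m = (case m of None \<Rightarrow> None | Some t \<Rightarrow> restr I t)"

fun red :: "'x tree \<Rightarrow> 'x tree" where
  "red (Leaf x) = Leaf x"
| "red (Node [t]) = red t"
| "red (Node ts) = Node (map red ts)"

definition red_m :: "'x mon \<Rightarrow> 'x mon" where
  "red_m m = map_option red m"

definition coprod_formula :: "'x mon \<Rightarrow> ('x mon \<times> 'x mon) \<Rightarrow>\<^sub>0 'k::field" where
  "coprod_formula T = (\<Sum>I\<in>Pow (leaves_m T).
      Poly_Mapping.single (red_m (restr_m I T), red_m (restr_m (leaves_m T - I) T)) 1)"

end

theory Submission
  imports Defs
begin

(*
  Both sides of the formula are multiplicative for grafting. For Delta_a this is the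
  homomorphism property. For the right-hand side, a set I of leaves of T = vee(T_1, ..., T_k)
  is the same as a tuple (I_1, ..., I_k) of leaf sets of the branches, complements are taken
  branchwise, and red(T|I) = vee(red(T_1|I_1), ..., red(T_k|I_k)): restriction deletes the
  branches with empty I_j, and the unit conventions of vee contract a root that is left with a
  single child exactly as the reduction does. Both sides agree on 1 and on the variables, so
  induction on T gives the formula.
*)

lemma finite_listset: "\<forall>A\<in>set As. finite A \<Longrightarrow> finite (listset As)"
proof (induction As)
  case (Cons A As)
  have "set_Cons A (listset As) = (\<lambda>(a, l). a # l) ` (A \<times> listset As)"
    by (auto simp: set_Cons_def)
  with Cons show ?case by simp
qed simp

lemma sum_set_Cons:
  assumes "finite A" "finite B"
  shows "(\<Sum>l\<in>set_Cons A B. F l) = (\<Sum>a\<in>A. \<Sum>l\<in>B. F (a # l))"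
proof -
  have "set_Cons A B = (\<lambda>(a, l). a # l) ` (A \<times> B)"
    by (auto simp: set_Cons_def)
  moreover have "inj_on (\<lambda>(a, l). a # l) (A \<times> B)"
    by (auto simp: inj_on_def)
  ultimately show ?thesis
    using assms by (simp add: sum.reindex sum.cartesian_product split_def)
qed

lemma sum_Pow_Un_disjoint:
  assumes "A \<inter> B = {}"
  shows "(\<Sum>I\<in>Pow (A \<union> B). H I) = (\<Sum>J\<in>Pow A. \<Sum>K\<in>Pow B. H (J \<union> K))"
  unfolding sum.cartesian_product
  by (rule sum.reindex_bij_witness[where i = "\<lambda>(J, K). J \<union> K" and j = "\<lambda>I. (I \<inter> A, I \<inter> B)"])
     (use assms in \<open>auto simp: Int_Un_distrib[symmetric] Int_absorb2\<close>)

lemma single_sum: "Poly_Mapping.single k (sum h S) = (\<Sum>x\<in>S. Poly_Mapping.single k (h x))"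
  by (induction S rule: infinite_finite_induct) (auto simp: single_add)

lemma lookup_sum_singles:
  assumes "finite A"
  shows "Poly_Mapping.lookup (\<Sum>a\<in>A. Poly_Mapping.single (g a) (1::'k::semiring_1)) m
    = of_nat (card {a\<in>A. g a = m})"
  using assms by (simp add: lookup_sum lookup_single when_def sum.inter_filter[symmetric])

lemma keys_sum_singles:
  assumes "finite A"
  shows "Poly_Mapping.keys (\<Sum>a\<in>A. Poly_Mapping.single (g a) (1::'k::semiring_char_0)) = g ` A"
  using assms by (auto simp: in_keys_iff lookup_sum_singles)

(* The factor c makes the statement inductive: splitting off the first argument
   multiplies the coefficient by a lookup in V t. *)
lemma sum_listset_keys_sums_of_singles:
  fixes A :: "'t \<Rightarrow> 'a set" and g :: "'t \<Rightarrow> 'a \<Rightarrow> 'm" and c :: "'k::field_char_0"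
  assumes fin: "\<And>t. finite (A t)"
  defines "V \<equiv> \<lambda>t. \<Sum>a\<in>A t. Poly_Mapping.single (g t a) (1::'k)"
  shows "(\<Sum>ms\<in>listset (map (\<lambda>t. Poly_Mapping.keys (V t)) ts).
            Poly_Mapping.single (f ms) (c * prod_list (map2 Poly_Mapping.lookup (map V ts) ms)))
       = (\<Sum>as\<in>listset (map A ts). Poly_Mapping.single (f (map2 g ts as)) c)"
proof (induction ts arbitrary: f c)
  case (Cons t ts)
  have keys_V: "Poly_Mapping.keys (V t) = g t ` A t"
    unfolding V_def using fin by (rule keys_sum_singles)
  have lookup_V: "Poly_Mapping.lookup (V t) m = of_nat (card {a\<in>A t. g t a = m})" for m
    unfolding V_def using fin by (rule lookup_sum_singles)
  have fin_listset: "finite (listset (map (\<lambda>t. Poly_Mapping.keys (V t)) ts))" "finite (listset (map A ts))"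
    using fin by (auto intro!: finite_listset simp: V_def keys_sum_singles)
  define \<Phi> where "\<Phi> m = (\<Sum>as\<in>listset (map A ts). Poly_Mapping.single (f (m # map2 g ts as)) c)" for m
  have "(\<Sum>ms\<in>listset (map (\<lambda>t. Poly_Mapping.keys (V t)) (t # ts)).
            Poly_Mapping.single (f ms) (c * prod_list (map2 Poly_Mapping.lookup (map V (t # ts)) ms)))
      = (\<Sum>m\<in>g t ` A t. \<Sum>ms\<in>listset (map (\<lambda>t. Poly_Mapping.keys (V t)) ts).
            Poly_Mapping.single (f (m # ms))
              ((c * Poly_Mapping.lookup (V t) m) * prod_list (map2 Poly_Mapping.lookup (map V ts) ms)))"
    using fin by (simp add: sum_set_Cons fin_listset keys_V mult.assoc)
  also have "\<dots> = (\<Sum>m\<in>g t ` A t. \<Sum>as\<in>listset (map A ts).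
            Poly_Mapping.single (f (m # map2 g ts as)) (c * of_nat (card {a\<in>A t. g t a = m})))"
    using Cons.IH[of "\<lambda>ms. f (_ # ms)"] by (simp add: lookup_V)
  also have "\<dots> = (\<Sum>m\<in>g t ` A t. \<Sum>a\<in>{a\<in>A t. g t a = m}. \<Phi> (g t a))"
    unfolding \<Phi>_def by (intro sum.cong refl, subst sum.swap) (simp add: single_sum[symmetric] mult.commute)
  also have "\<dots> = (\<Sum>a\<in>A t. \<Phi> (g t a))"
    using fin by (intro sum.group) auto
  also have "\<dots> = (\<Sum>as\<in>listset (map A (t # ts)). Poly_Mapping.single (f (map2 g (t # ts) as)) c)"
    using fin by (simp add: sum_set_Cons fin_listset \<Phi>_def)
  finally show ?case .
qed simp

lemma multilin_sums_of_singles: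
  assumes "\<And>t. finite (A t)"
  shows "multilin f (map (\<lambda>t. \<Sum>a\<in>A t. Poly_Mapping.single (g t a) (1::'k::field_char_0)) ts)
    = (\<Sum>as\<in>listset (map A ts). Poly_Mapping.single (f (map2 g ts as)) 1)"
  using sum_listset_keys_sums_of_singles[where c = 1, OF assms] by (simp add: multilin_def comp_def)

lemma listset_singletons: "listset (map (\<lambda>x. {x}) xs) = {xs}"
  by (induction xs) (auto simp: set_Cons_def)

lemma graft_Some:
  assumes "2 \<le> length ts"
  shows "graft (map Some ts) = Some (Node ts)"
proof -
  have "[t. Some t \<leftarrow> map Some ts] = ts"
    by (induction ts) auto
  with assms show ?thesis
    by (cases ts rule: remdups_adj.cases) (auto simp: graft_def)
qed

lemma vee_singles:
  assumes "2 \<le> length ts"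
  shows "vee (map (\<lambda>t. Poly_Mapping.single (Some t) (1::'k::field_char_0)) ts)
    = Poly_Mapping.single (Some (Node ts)) 1"
  using multilin_sums_of_singles[of "\<lambda>t. {t}" graft "\<lambda>_. Some" ts] assms
  by (simp add: vee_def listset_singletons graft_Some zip_same_conv_map comp_def)

lemma finite_leaves:
  fixes t :: "'x tree" and ts :: "'x tree list"
  shows "finite (leaves t)" "finite (leavess i ts)"
  by (induction t and i ts rule: leaves_leavess.induct) auto

lemma mem_leavess: "k # p \<in> leavess i ts \<longleftrightarrow> i \<le> k \<and> k < i + length ts \<and> p \<in> leaves (ts ! (k - i))"
  by (induction ts arbitrary: i) (auto simp: nth_Cons' Suc_diff_Suc Suc_le_eq)

definition split_leaves :: "nat list set \<Rightarrow> nat \<Rightarrow> nat \<Rightarrow> nat list set list" where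
  "split_leaves I i n = map (\<lambda>k. {p. k # p \<in> I}) [i..<i + n]"

lemma length_split_leaves [simp]: "length (split_leaves I i n) = n"
  by (simp add: split_leaves_def)

lemma nth_split_leaves: "k < n \<Longrightarrow> split_leaves I i n ! k = {p. (i + k) # p \<in> I}"
  by (simp add: split_leaves_def)

lemma split_leaves_Suc: "split_leaves I i (Suc n) = {p. i # p \<in> I} # split_leaves I (Suc i) n"
  by (simp add: split_leaves_def upt_conv_Cons del: upt_Suc)

lemma split_leaves_Cons_image_Un:
  assumes "K \<subseteq> leavess (Suc i) ts"
  shows "split_leaves (Cons i ` J \<union> K) i (Suc (length ts)) = J # split_leaves K (Suc i) (length ts)"
  using assms by (auto simp: split_leaves_def upt_conv_Cons mem_leavess simp del: upt_Suc)

lemma sum_listset_Pow_leaves: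
  "(\<Sum>Js\<in>listset (map (\<lambda>t. Pow (leaves t)) ts). H Js)
    = (\<Sum>I\<in>Pow (leavess i ts). H (split_leaves I i (length ts)))"
proof (induction ts arbitrary: i H)
  case (Cons t ts)
  let ?L = "Cons i ` leaves t" and ?R = "leavess (Suc i) ts" and ?n = "length ts"
  have "(\<Sum>Js\<in>listset (map (\<lambda>t. Pow (leaves t)) (t # ts)). H Js)
      = (\<Sum>J\<in>Pow (leaves t). \<Sum>K\<in>Pow ?R. H (J # split_leaves K (Suc i) ?n))"
    using Cons.IH[of _ "Suc i"]
    by (simp add: sum_set_Cons finite_leaves finite_listset)
  also have "\<dots> = (\<Sum>J\<in>Pow (leaves t). \<Sum>K\<in>Pow ?R. H (split_leaves (Cons i ` J \<union> K) i (Suc ?n)))"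
    by (simp add: split_leaves_Cons_image_Un)
  also have "\<dots> = (\<Sum>J\<in>Pow ?L. \<Sum>K\<in>Pow ?R. H (split_leaves (J \<union> K) i (Suc ?n)))"
    by (simp add: sum.reindex inj_on_image_Pow image_Pow_surj[OF refl, symmetric])
  also have "\<dots> = (\<Sum>I\<in>Pow (leavess i (t # ts)). H (split_leaves I i (length (t # ts))))"
    by (simp only: leavess.simps length_Cons, subst sum_Pow_Un_disjoint) (auto simp: mem_leavess)
  finally show ?case .
qed (simp add: split_leaves_def)

lemma restrs_eq_restr_split_leaves:
  "restrs I i ts = [t'. Some t' \<leftarrow> map2 (\<lambda>t J. restr J t) ts (split_leaves I i (length ts))]"
  by (induction ts arbitrary: i) (simp_all add: split_leaves_Suc split: option.split)

lemma filter_Some_map_option: "[t. Some t \<leftarrow> map (map_option f) ms] = map f [t. Some t \<leftarrow> ms]"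
  by (induction ms) (auto split: option.split)

lemma red_restr_Node:
  "red_m (restr I (Node ts)) = graft (map2 (\<lambda>t J. red_m (restr J t)) ts (split_leaves I 0 (length ts)))"
proof -
  define ts' where "ts' = [t'. Some t' \<leftarrow> map2 (\<lambda>t J. restr J t) ts (split_leaves I 0 (length ts))]"
  have restr_Node: "restr I (Node ts) = (if ts' = [] then None else Some (Node ts'))"
    unfolding restr.simps restrs_eq_restr_split_leaves ts'_def[symmetric] by (simp split: list.split)
  have red_ts': "[t'. Some t' \<leftarrow> map2 (\<lambda>t J. red_m (restr J t)) ts (split_leaves I 0 (length ts))] = map red ts'"
    unfolding ts'_def red_m_def filter_Some_map_option[symmetric] by (simp add: comp_def case_prod_beta)
  show ?thesis
    unfolding graft_def Let_def restr_Node red_ts'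
    by (cases ts' rule: remdups_adj.cases) (simp_all add: red_m_def)
qed

lemma split_leaves_Diff:
  assumes "I \<subseteq> leavess i ts"
  shows "split_leaves (leavess i ts - I) i (length ts) = map2 (\<lambda>t J. leaves t - J) ts (split_leaves I i (length ts))"
  using assms by (intro nth_equalityI) (auto simp: nth_split_leaves mem_leavess)

lemma coprod_formula_None: "coprod_formula None = one_t"
  by (simp add: coprod_formula_def leaves_m_def restr_m_def red_m_def one_t_def)

lemma coprod_formula_Some:
  "coprod_formula (Some t) =
    (\<Sum>J\<in>Pow (leaves t). Poly_Mapping.single (red_m (restr J t), red_m (restr (leaves t - J) t)) 1)"
  by (simp add: coprod_formula_def leaves_m_def restr_m_def)

lemma coprod_formula_Leaf: "coprod_formula (Some (Leaf x)) = prim_t x"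
proof -
  have "Pow {[]::nat list} = {{}, {[]}}"
    by auto
  then show ?thesis
    by (simp add: coprod_formula_Some prim_t_def red_m_def add.commute)
qed

lemma coprod_formula_Node:
  "coprod_formula (Some (Node ts)) =
    (vee_t (map (\<lambda>t. coprod_formula (Some t)) ts) :: _ \<Rightarrow>\<^sub>0 'k::field_char_0)"
proof -
  define L where "L = leavess 0 ts"
  define branch where "branch I = split_leaves I 0 (length ts)" for I
  define G where "G t J = (red_m (restr J t), red_m (restr (leaves t - J) t))" for t :: "'a tree" and J
  have "vee_t (map (\<lambda>t. coprod_formula (Some t)) ts)
      = (\<Sum>Js\<in>listset (map (\<lambda>t. Pow (leaves t)) ts).
          Poly_Mapping.single (graft (map fst (map2 G ts Js)), graft (map snd (map2 G ts Js))) (1::'k))"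
    unfolding vee_t_def coprod_formula_Some G_def
    by (rule multilin_sums_of_singles) (simp add: finite_leaves)
  also have "\<dots> = (\<Sum>I\<in>Pow L.
          Poly_Mapping.single (graft (map fst (map2 G ts (branch I))), graft (map snd (map2 G ts (branch I)))) 1)"
    unfolding L_def branch_def by (rule sum_listset_Pow_leaves)
  also have "\<dots> = (\<Sum>I\<in>Pow L.
          Poly_Mapping.single (red_m (restr I (Node ts)), red_m (restr (L - I) (Node ts))) 1)"
  proof (rule sum.cong[OF refl])
    fix I assume "I \<in> Pow L"
    then have snd_eq: "map snd (map2 G ts (branch I)) = map2 (\<lambda>t J. red_m (restr J t)) ts (branch (L - I))"
      by (intro nth_equalityI) (auto simp: L_def branch_def G_def split_leaves_Diff)
    have fst_eq: "map fst (map2 G ts (branch I)) = map2 (\<lambda>t J. red_m (restr J t)) ts (branch I)"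
      by (intro nth_equalityI) (auto simp: G_def)
    show "Poly_Mapping.single (graft (map fst (map2 G ts (branch I))), graft (map snd (map2 G ts (branch I)))) (1::'k)
        = Poly_Mapping.single (red_m (restr I (Node ts)), red_m (restr (L - I) (Node ts))) 1"
      unfolding red_restr_Node branch_def[symmetric] fst_eq snd_eq ..
  qed
  also have "\<dots> = coprod_formula (Some (Node ts))"
    by (simp add: coprod_formula_Some L_def)
  finally show ?thesis ..
qed

lemma hom_single_eq_coprod_formula:
  fixes D :: "('x mon \<Rightarrow>\<^sub>0 'k::field_char_0) \<Rightarrow> (('x mon \<times> 'x mon) \<Rightarrow>\<^sub>0 'k)"
  assumes var: "\<And>x. D (var_v x) = prim_t x"
    and P_Node: "\<And>ts. P (Node ts) \<Longrightarrow> 2 \<le> length ts \<and> (\<forall>t\<in>set ts. P t)"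
    and hom: "\<And>ts. P (Node ts) \<Longrightarrow>
      D (vee (map (\<lambda>t. Poly_Mapping.single (Some t) 1) ts))
        = vee_t (map (\<lambda>t. D (Poly_Mapping.single (Some t) 1)) ts)"
  shows "P t \<Longrightarrow> D (Poly_Mapping.single (Some t) 1) = coprod_formula (Some t)"
proof (induction t)
  case (Leaf x)
  show ?case
    using var[of x] by (simp add: var_v_def coprod_formula_Leaf)
next
  case (Node ts)
  have "2 \<le> length ts" and "\<forall>t\<in>set ts. P t"
    using P_Node[OF Node.prems] by auto
  have "D (Poly_Mapping.single (Some (Node ts)) 1) = D (vee (map (\<lambda>t. Poly_Mapping.single (Some t) 1) ts))"
    using \<open>2 \<le> length ts\<close> by (simp add: vee_singles)
  also have "\<dots> = vee_t (map (\<lambda>t. D (Poly_Mapping.single (Some t) 1)) ts)"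
    using Node.prems by (rule hom)
  also have "\<dots> = vee_t (map (\<lambda>t. coprod_formula (Some t)) ts)"
    using Node.IH \<open>\<forall>t\<in>set ts. P t\<close> by (simp cong: map_cong)
  finally show ?case
    by (simp add: coprod_formula_Node)
qed

lemma is_Delta_inf_eq_coprod_formula:
  fixes D :: "('x mon \<Rightarrow>\<^sub>0 'k::field_char_0) \<Rightarrow> (('x mon \<times> 'x mon) \<Rightarrow>\<^sub>0 'k)"
  assumes "is_Delta_inf D" and "is_mon_inf T"
  shows "D (Poly_Mapping.single T 1) = coprod_formula T"
proof (cases T)
  case None
  then show ?thesis
    using assms(1) by (simp add: is_Delta_inf_def one_v_def coprod_formula_None)
next
  case (Some t)
  have vee_hom: "D (vee vs) = vee_t (map D vs)" if "2 \<le> length vs" "set vs \<subseteq> Kinf" for vs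
    using assms(1) that by (simp add: is_Delta_inf_def)
  have "D (Poly_Mapping.single (Some t) 1) = coprod_formula (Some t)"
  proof (rule hom_single_eq_coprod_formula[where P = reduced])
    fix ts :: "'x tree list"
    assume "reduced (Node ts)"
    then have "2 \<le> length ts" and "set (map (\<lambda>t. Poly_Mapping.single (Some t) (1::'k)) ts) \<subseteq> Kinf"
      by (auto simp: Kinf_def is_mon_inf_def)
    then show "D (vee (map (\<lambda>t. Poly_Mapping.single (Some t) 1) ts))
        = vee_t (map (\<lambda>t. D (Poly_Mapping.single (Some t) 1)) ts)"
      by (simp add: vee_hom comp_def)
  qed (use assms Some in \<open>auto simp: is_Delta_inf_def is_mon_inf_def\<close>)
  with Some show ?thesis
    by simp
qed

lemma is_Delta_bin_eq_coprod_formula: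
  fixes D :: "('x mon \<Rightarrow>\<^sub>0 'k::field_char_0) \<Rightarrow> (('x mon \<times> 'x mon) \<Rightarrow>\<^sub>0 'k)"
  assumes "is_Delta_bin D" and "is_mon_bin T"
  shows "D (Poly_Mapping.single T 1) = coprod_formula T"
proof (cases T)
  case None
  then show ?thesis
    using assms(1) by (simp add: is_Delta_bin_def one_v_def coprod_formula_None)
next
  case (Some t)
  have "D (Poly_Mapping.single (Some t) 1) = coprod_formula (Some t)"
  proof (rule hom_single_eq_coprod_formula[where P = binary])
    fix ts :: "'x tree list"
    assume "binary (Node ts)"
    then obtain a b where "ts = [a, b]" "binary a" "binary b"
      by (cases ts rule: remdups_adj.cases) auto
    then show "D (vee (map (\<lambda>t. Poly_Mapping.single (Some t) 1) ts))
        = vee_t (map (\<lambda>t. D (Poly_Mapping.single (Some t) 1)) ts)"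
      using assms(1) by (simp add: is_Delta_bin_def Kbin_def is_mon_bin_def)
  qed (use assms Some in \<open>auto simp: is_Delta_bin_def is_mon_bin_def\<close>)
  with Some show ?thesis
    by simp
qed

theorem proposition4p3p5:
  fixes D :: "('x::countable mon \<Rightarrow>\<^sub>0 'k::field_char_0) \<Rightarrow> (('x mon \<times> 'x mon) \<Rightarrow>\<^sub>0 'k)"
    and D' :: "('x mon \<Rightarrow>\<^sub>0 'k) \<Rightarrow> (('x mon \<times> 'x mon) \<Rightarrow>\<^sub>0 'k)"
  shows "(is_Delta_inf D \<longrightarrow>
            (\<forall>T. is_mon_inf T \<longrightarrow> D (Poly_Mapping.single T 1) = coprod_formula T))
       \<and> (is_Delta_bin D' \<longrightarrow>
            (\<forall>T. is_mon_bin T \<longrightarrow> D' (Poly_Mapping.single T 1) = coprod_formula T))"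
  by (simp add: is_Delta_inf_eq_coprod_formula is_Delta_bin_eq_coprod_formula)

end
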